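(* Let $k\in\mathbb{N}$, $R>0$, $S^k=\{y\in\mathbb{R}^{k+1}:|y|=R\}$, and fix $x\in\mathbb{R}^{k+1}$ with $|x|\neq R$; write $\omega=\omega(x,y)$. For every real $b$ and $\alpha=k/2+ib$, $$\int_{S^k}\omega^{\alpha}\,dS_y=\int_{S^k}\omega^{k/2}\cos(b\ln\omega)\,dS_y .$$ Moreover, for every real $b$ and every $m=0,1,2,\dots$, $$\int_{S^k}\omega^{k/2}(\ln\omega)^{2m+1}\cos(b\ln\omega)\,dS_y=0,\qquad \int_{S^k}\omega^{k/2}(\ln\omega)^{2m}\sin(b\ln\omega)\,dS_y=0,$$ and for every $\alpha\in\mathbb{C}$ $$F(\alpha):=\int_{S^k}\omega^\alpha\,dS_y=\sum_{m=0}^\infty\frac{(\alpha-k/2)^{2m}}{(2m)!}\int_{S^k}\omega^{k/2}(\ln\omega)^{2m}\,dS_y,$$ which is the Taylor expansion of the entire function $F$ at $\alpha=k/2$.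
   Context: For $x\neq y$ in $\mathbb{R}^{k+1}$, $\omega(x,y)=\left|\dfrac{|x|^2-|y|^2}{|x-y|^2}\right|$. $dS_y$ is the surface measure on $S^k$. For $|x|\neq R$ and $y\in S^k$, $\omega>0$ and $\omega^\alpha=e^{\alpha\ln\omega}$. *)

theory Defs
  imports "HOL-Analysis.Analysis"
begin

definition omega :: "'a::real_normed_vector \<Rightarrow> 'a \<Rightarrow> real" where
  "omega x y = \<bar>(norm x ^ 2 - norm y ^ 2) / (norm (x - y)) ^ 2\<bar>"

text \<open>Surface measure on the sphere of radius R in an n-dimensional Euclidean space
  (n = DIM('a)), realised as the cone measure: sigma(A) = (n/R) * Lebesgue measure of
  the cone {t y. y in A, 0 < t <= 1}, i.e. the push-forward of Lebesgue measure on the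
  punctured closed ball under radial projection z |-> (R/|z|) z, scaled by n/R.\<close>
definition sphere_measure :: "real \<Rightarrow> 'a::euclidean_space measure" where
  "sphere_measure R =
     scale_measure (ennreal (real DIM('a) / R))
       (distr (restrict_space lborel (cball 0 R - {0}))
              (restrict_space borel (sphere 0 R))
              (\<lambda>z. (R / norm z) *\<^sub>R z))"

definition cpow_pos :: "real \<Rightarrow> complex \<Rightarrow> complex" where
  "cpow_pos w a = exp (a * complex_of_real (ln w))"

end

(*
  For |x| <> R the weight omega(x, .) on the sphere |y| = R is the scale factor
  (|p|^2 - R^2) / |y - p|^2 of the inversion about a pole p outside the sphere (p = x, or the
  mirror image of x if x is inside) in the sphere orthogonal to |y| = R.  This inversion maps
  the sphere to itself, replaces omega by 1/omega and has Jacobian omega^k, so the weight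
  omega^(k/2) makes the integral of omega^(k/2) h(ln omega) invariant under h(t) -> h(-t), and
  it vanishes for odd h.  The Jacobian is computed on the punctured ball, where the sphere
  measure is a cone measure.

  Writing omega^alpha = omega^(k/2) exp((alpha - k/2) ln omega) and integrating termwise (ln omega
  is bounded) gives the Taylor series of F at k/2, which converges everywhere; its odd
  coefficients vanish, and so does the imaginary part of F on the line Re alpha = k/2.
*)

theory Submission
  imports Defs "HOL-Complex_Analysis.Cauchy_Integral_Formula"
begin

section \<open>Inversion in a sphere\<close>

definition inversion_scale :: "'a::real_inner \<Rightarrow> real \<Rightarrow> 'a \<Rightarrow> real" where
  "inversion_scale p c y = c / (norm (y - p))\<^sup>2"

text \<open>
  Inversion about p with power c, i.e. in the sphere of radius sqrt c about p; for
  c = |p|^2 - R^2 that sphere is orthogonal to the sphere of radius R about the origin.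
\<close>

definition inversion :: "'a::real_inner \<Rightarrow> real \<Rightarrow> 'a \<Rightarrow> 'a" where
  "inversion p c y = p + inversion_scale p c y *\<^sub>R (y - p)"

lemma power2_norm_diff:
  fixes a b :: "'a::real_inner"
  shows "(norm (a - b))\<^sup>2 = (norm a)\<^sup>2 - 2 * (a \<bullet> b) + (norm b)\<^sup>2"
  by (simp add: power2_norm_eq_inner inner_diff_left inner_diff_right inner_commute)

lemma power2_norm_add_scaleR:
  fixes a w :: "'a::real_inner"
  shows "(norm (a + t *\<^sub>R w))\<^sup>2 = (norm a)\<^sup>2 + 2 * t * (a \<bullet> w) + t\<^sup>2 * (norm w)\<^sup>2"
  unfolding power2_norm_eq_inner
  by (simp add: inner_add_left inner_add_right inner_commute power2_eq_square algebra_simps)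

lemma norm_inversion_sphere:
  fixes u p :: "'a::real_inner"
  assumes "norm u = R" and "c = (norm p)\<^sup>2 - R\<^sup>2" and "u \<noteq> p"
  shows "norm (inversion p c u) = R"
proof -
  define d where "d = (norm (u - p))\<^sup>2"
  have "d > 0" using assms(3) by (simp add: d_def)
  have d: "d = R\<^sup>2 - 2 * (u \<bullet> p) + (norm p)\<^sup>2"
    using assms(1) by (simp add: d_def power2_norm_diff)
  have "(norm (inversion p c u))\<^sup>2 = (norm p)\<^sup>2 + 2 * (c/d) * (p \<bullet> (u - p)) + (c/d)\<^sup>2 * d"
    unfolding inversion_def inversion_scale_def power2_norm_add_scaleR d_def by simp
  also have "\<dots> = R\<^sup>2"
    using \<open>d > 0\<close> d assms(2)
    by (simp add: inner_diff_right inner_commute field_simps power2_eq_square dot_square_norm) algebra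
  finally show ?thesis
    using assms(1) by (metis norm_ge_zero power2_eq_imp_eq)
qed

lemma power2_norm_inversion_diff:
  fixes u p :: "'a::real_inner"
  assumes "u \<noteq> p"
  shows "(norm (inversion p c u - p))\<^sup>2 = c\<^sup>2 / (norm (u - p))\<^sup>2"
proof -
  have "norm (u - p) > 0" using assms by simp
  moreover have "inversion p c u - p = (c / (norm (u - p))\<^sup>2) *\<^sub>R (u - p)"
    by (simp add: inversion_def inversion_scale_def)
  ultimately show ?thesis
    by (simp only: norm_scaleR) (simp add: power2_eq_square field_simps)
qed

lemma inversion_inversion:
  fixes u p :: "'a::real_inner"
  assumes "u \<noteq> p" and "c \<noteq> 0"
  shows "inversion p c (inversion p c u) = u"
  using assms unfolding inversion_def[of p c "inversion p c u"] inversion_scale_def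
  by (simp add: power2_norm_inversion_diff) (simp add: inversion_def inversion_scale_def power2_eq_square)

lemma inversion_scale_inversion:
  fixes u p :: "'a::real_inner"
  assumes "u \<noteq> p" and "c \<noteq> 0"
  shows "inversion_scale p c (inversion p c u) = 1 / inversion_scale p c u"
  using assms unfolding inversion_scale_def[of p c "inversion p c u"]
  by (simp add: power2_norm_inversion_diff) (simp add: inversion_scale_def power2_eq_square)

lemma omega_eq_inversion_scale_exterior:
  fixes x u :: "'a::real_inner"
  assumes "norm u = R" and "norm x > R" and "R > 0"
  shows "omega x u = inversion_scale x ((norm x)\<^sup>2 - R\<^sup>2) u"
proof -
  have "R\<^sup>2 < (norm x)\<^sup>2" using assms by (simp add: power_strict_mono)
  then show ?thesis
    using assms(1) unfolding omega_def inversion_scale_def by (simp add: norm_minus_commute)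
qed

text \<open>For an interior point x the pole is the mirror image of x in the sphere.\<close>

lemma omega_eq_inversion_scale_interior:
  fixes x u :: "'a::real_inner"
  assumes "norm u = R" and "norm x < R" and "x \<noteq> 0" and "R > 0"
  defines "p \<equiv> (R\<^sup>2 / (norm x)\<^sup>2) *\<^sub>R x"
  shows "omega x u = inversion_scale p ((norm p)\<^sup>2 - R\<^sup>2) u"
proof -
  have nx: "norm x > 0" using assms by simp
  have "(norm x)\<^sup>2 < R\<^sup>2" using assms nx by (simp add: power_strict_mono)
  have np: "norm p = R\<^sup>2 / norm x"
    unfolding p_def using nx by (simp add: power2_eq_square)
  have "(norm (u - p))\<^sup>2 = R\<^sup>2 - 2 * (R\<^sup>2 / (norm x)\<^sup>2) * (u \<bullet> x) + R^4 / (norm x)\<^sup>2"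
    unfolding power2_norm_diff np p_def using assms(1) nx
    by (simp add: power2_eq_square field_simps power4_eq_xxxx)
  also have "\<dots> = (R\<^sup>2 / (norm x)\<^sup>2) * (norm (x - u))\<^sup>2"
    unfolding power2_norm_diff using assms(1) nx
    by (simp add: inner_commute field_simps power2_eq_square power4_eq_xxxx)
  finally have up: "(norm (u - p))\<^sup>2 = (R\<^sup>2 / (norm x)\<^sup>2) * (norm (x - u))\<^sup>2" .
  have "x \<noteq> u" using assms by auto
  have "omega x u = (R\<^sup>2 - (norm x)\<^sup>2) / (norm (x - u))\<^sup>2"
    unfolding omega_def using \<open>(norm x)\<^sup>2 < R\<^sup>2\<close> assms(1) by simp
  also have "\<dots> = inversion_scale p ((norm p)\<^sup>2 - R\<^sup>2) u"
    unfolding inversion_scale_def up np using nx \<open>x \<noteq> u\<close> assms(4)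
    by (simp add: field_simps power2_eq_square)
  finally show ?thesis .
qed

locale sphere_inversion =
  fixes p :: "'a::real_inner" and c R :: real
  assumes radius_pos: "R > 0" and pole_outside: "norm p > R" and power_def: "c = (norm p)\<^sup>2 - R\<^sup>2"
begin

lemma power_pos: "c > 0"
  unfolding power_def using pole_outside radius_pos by (simp add: power_strict_mono)

lemma sphere_ne_pole: "norm u = R \<Longrightarrow> u \<noteq> p"
  using pole_outside by auto

lemma norm_inversion: "norm u = R \<Longrightarrow> norm (inversion p c u) = R"
  using norm_inversion_sphere[OF _ power_def sphere_ne_pole] by blast

lemma inversion_involutive: "norm u = R \<Longrightarrow> inversion p c (inversion p c u) = u"
  using inversion_inversion[OF sphere_ne_pole] power_pos by simp

lemma inversion_scale_involutive:
  "norm u = R \<Longrightarrow> inversion_scale p c (inversion p c u) = 1 / inversion_scale p c u"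
  using inversion_scale_inversion[OF sphere_ne_pole] power_pos by simp

lemma inversion_scale_pos: "norm u = R \<Longrightarrow> inversion_scale p c u > 0"
  using power_pos sphere_ne_pole unfolding inversion_scale_def by auto

lemma continuous_on_inversion: "continuous_on (sphere 0 R) (inversion p c)"
  unfolding inversion_def inversion_scale_def
  by (intro continuous_intros) (use sphere_ne_pole in auto)

lemma continuous_on_inversion_scale: "continuous_on (sphere 0 R) (inversion_scale p c)"
  unfolding inversion_scale_def by (intro continuous_intros) (use sphere_ne_pole in auto)

end

lemma omega_eq_inversion_scale:
  fixes x :: "'a::real_inner"
  assumes "R > 0" and "norm x \<noteq> R" and "x \<noteq> 0"
  obtains p c where "sphere_inversion p c R" and "\<And>u. norm u = R \<Longrightarrow> omega x u = inversion_scale p c u"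
proof (cases "norm x > R")
  case True
  show ?thesis
    by (rule that[of x "(norm x)\<^sup>2 - R\<^sup>2"])
      (use True assms omega_eq_inversion_scale_exterior in \<open>auto simp: sphere_inversion_def\<close>)
next
  case False
  then have "norm x < R" using assms(2) by simp
  define p where "p = (R\<^sup>2 / (norm x)\<^sup>2) *\<^sub>R x"
  have "norm x > 0" using assms(3) by simp
  then have "R < norm p"
    using \<open>norm x < R\<close> assms(1) by (simp add: p_def field_simps power2_eq_square)
  then have "sphere_inversion p ((norm p)\<^sup>2 - R\<^sup>2) R"
    using assms(1) by (simp add: sphere_inversion_def)
  then show ?thesis
    using that omega_eq_inversion_scale_interior[OF _ \<open>norm x < R\<close> assms(3,1)] unfolding p_def by blast
qed

definition householder :: "'a::real_inner \<Rightarrow> 'a \<Rightarrow> 'a" where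
  "householder v h = h - (2 * (v \<bullet> h)) *\<^sub>R v"

lemma householder_add: "householder v (a + b) = householder v a + householder v b"
  and householder_scaleR: "householder v (t *\<^sub>R a) = t *\<^sub>R householder v a"
  and householder_diff: "householder v (a - b) = householder v a - householder v b"
  by (simp_all add: householder_def inner_add_right inner_diff_right algebra_simps)

lemma linear_householder: "linear (householder v)"
  by (auto simp: linear_iff householder_add householder_scaleR)

lemma householder_householder: "norm v = 1 \<Longrightarrow> householder v (householder v y) = y"
  by (simp add: householder_def inner_diff_right algebra_simps dot_square_norm)

lemma orthogonal_transformation_householder:
  "norm v = 1 \<Longrightarrow> orthogonal_transformation (householder v)"
  by (simp add: orthogonal_transformation_def linear_householder householder_def
      inner_diff_right inner_diff_left algebra_simps dot_square_norm inner_commute)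

lemma householder_sgn: "householder (sgn w) y = y - (2 * (w \<bullet> y) / (norm w)\<^sup>2) *\<^sub>R w"
  by (simp add: householder_def sgn_div_norm power2_eq_square divide_inverse inverse_mult_distrib mult_ac)

lemma inner_householder_inversion:
  fixes u p :: "'a::real_inner"
  assumes "norm u = R" and "c = (norm p)\<^sup>2 - R\<^sup>2" and "u \<noteq> p"
  shows "u \<bullet> householder (sgn (u - p)) (inversion p c u) = R\<^sup>2"
proof -
  define d where "d = (norm (u - p))\<^sup>2"
  have "d > 0" using assms(3) by (simp add: d_def)
  have d: "d = R\<^sup>2 - 2 * (u \<bullet> p) + (norm p)\<^sup>2"
    using assms(1) by (simp add: d_def power2_norm_diff)
  have "u \<bullet> householder (sgn (u - p)) (inversion p c u) =
     u \<bullet> inversion p c u - 2 * (((u - p) \<bullet> inversion p c u) * ((u - p) \<bullet> u)) / d"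
    unfolding householder_sgn d_def[symmetric] using \<open>d > 0\<close>
    by (simp add: inner_diff_right inner_add_right inner_commute field_simps)
  also have "\<dots> = R\<^sup>2"
    unfolding inversion_def inversion_scale_def d_def[symmetric] using \<open>d > 0\<close> d assms(1,2)
    by (simp add: inner_add_right inner_diff_right inner_diff_left inner_commute field_simps
        power2_eq_square dot_square_norm) algebra
  finally show ?thesis .
qed

definition radial_proj :: "real \<Rightarrow> 'a::real_normed_vector \<Rightarrow> 'a" where
  "radial_proj R z = (R / norm z) *\<^sub>R z"

lemma norm_radial_proj: "z \<noteq> 0 \<Longrightarrow> R > 0 \<Longrightarrow> norm (radial_proj R z) = R"
  by (simp add: radial_proj_def)

lemma radial_proj_in_sphere: "z \<in> cball 0 R - {0} \<Longrightarrow> R > 0 \<Longrightarrow> radial_proj R z \<in> sphere 0 R"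
  by (simp add: norm_radial_proj)

lemma continuous_on_radial_proj: "continuous_on (cball 0 R - {0}) (radial_proj R)"
  unfolding radial_proj_def by (intro continuous_intros) auto

lemma continuous_on_comp_radial_proj:
  assumes "continuous_on (sphere 0 R) G" and "R > 0"
  shows "continuous_on (cball 0 R - {0}) (\<lambda>z. G (radial_proj R z))"
  by (rule continuous_on_compose2[OF assms(1) continuous_on_radial_proj])
    (use assms(2) radial_proj_in_sphere in blast)

lemma has_derivative_radial_proj:
  fixes z :: "'a::real_inner"
  assumes "z \<noteq> 0"
  shows "(radial_proj R has_derivative (\<lambda>h. (R / norm z) *\<^sub>R (h - (sgn z \<bullet> h) *\<^sub>R sgn z))) (at z)"
  unfolding radial_proj_def[abs_def] using assms
  by (auto intro!: derivative_eq_intros has_derivative_norm)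
    (simp add: sgn_div_norm scaleR_diff_right inner_commute field_simps fun_eq_iff)

lemma has_derivative_norm_diff:
  fixes y p :: "'a::real_inner"
  assumes "y \<noteq> p"
  shows "((\<lambda>x. norm (x - p)) has_derivative (\<lambda>h. h \<bullet> sgn (y - p))) (at y)"
proof -
  have "((\<lambda>x. x - p) has_derivative (\<lambda>h. h)) (at y)"
    by (auto intro!: derivative_eq_intros)
  from has_derivative_compose[OF this has_derivative_norm] show ?thesis
    using assms by simp
qed

lemma has_derivative_inversion:
  fixes y p :: "'a::real_inner"
  assumes "y \<noteq> p"
  shows "(inversion p c has_derivative
           (\<lambda>h. inversion_scale p c y *\<^sub>R householder (sgn (y - p)) h)) (at y)"
  using assms unfolding inversion_def[abs_def] inversion_scale_def householder_def
  by (auto intro!: derivative_eq_intros has_derivative_norm_diff)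
    (simp add: sgn_div_norm scaleR_diff_right inner_commute field_simps power2_eq_square
      power4_eq_xxxx fun_eq_iff)

text \<open>
  The sphere measure is a cone measure, so the inversion of the sphere is lifted radially to
  a self-map of the punctured ball, to which the change of variables formula applies.
\<close>

definition cone_inversion :: "'a::real_inner \<Rightarrow> real \<Rightarrow> real \<Rightarrow> 'a \<Rightarrow> 'a" where
  "cone_inversion p c R z = (norm z / R) *\<^sub>R inversion p c (radial_proj R z)"

definition cone_inversion_deriv :: "'a::real_inner \<Rightarrow> real \<Rightarrow> real \<Rightarrow> 'a \<Rightarrow> 'a \<Rightarrow> 'a" where
  "cone_inversion_deriv p c R z h =
    (let u = radial_proj R z; \<mu> = inversion_scale p c u; v = sgn (u - p)
     in \<mu> *\<^sub>R householder v h +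
        (sgn z \<bullet> h) *\<^sub>R ((1/R) *\<^sub>R inversion p c u - \<mu> *\<^sub>R householder v (sgn z)))"

lemma has_derivative_cone_inversion:
  fixes z p :: "'a::real_inner"
  assumes "z \<noteq> 0" and "R > 0" and "radial_proj R z \<noteq> p"
  shows "(cone_inversion p c R has_derivative cone_inversion_deriv p c R z) (at z)"
proof -
  define u where "u = radial_proj R z"
  define \<mu> where "\<mu> = inversion_scale p c u"
  define v where "v = sgn (u - p)"
  have inv: "((\<lambda>z. inversion p c (radial_proj R z)) has_derivative
      (\<lambda>h. \<mu> *\<^sub>R householder v ((R / norm z) *\<^sub>R (h - (sgn z \<bullet> h) *\<^sub>R sgn z)))) (at z)"
    using has_derivative_compose[OF has_derivative_radial_proj[OF assms(1)] has_derivative_inversion]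
      assms(3) unfolding u_def \<mu>_def v_def by blast
  have "((\<lambda>z. norm z / R) has_derivative (\<lambda>h. (h \<bullet> sgn z) / R)) (at z)"
    using has_derivative_norm[OF assms(1)] assms(2) by (auto intro!: derivative_eq_intros)
  from has_derivative_scaleR[OF this inv]
  have "(cone_inversion p c R has_derivative
      (\<lambda>h. (norm z / R) *\<^sub>R (\<mu> *\<^sub>R householder v ((R / norm z) *\<^sub>R (h - (sgn z \<bullet> h) *\<^sub>R sgn z)))
        + ((h \<bullet> sgn z) / R) *\<^sub>R inversion p c u)) (at z)"
    unfolding cone_inversion_def[abs_def] u_def by simp
  also have "(\<lambda>h. (norm z / R) *\<^sub>R (\<mu> *\<^sub>R householder v ((R / norm z) *\<^sub>R (h - (sgn z \<bullet> h) *\<^sub>R sgn z)))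
        + ((h \<bullet> sgn z) / R) *\<^sub>R inversion p c u) = cone_inversion_deriv p c R z"
    by (rule ext) (use assms(1,2) in \<open>simp add: cone_inversion_deriv_def Let_def u_def[symmetric]
        \<mu>_def[symmetric] v_def[symmetric] householder_diff householder_scaleR inner_commute
        algebra_simps\<close>)
  finally show ?thesis .
qed

section \<open>The Jacobian determinant\<close>

lemma det_matrix_shear_least:
  fixes w :: "real^'n::{finite,wellorder}"
  assumes least: "\<And>i. i0 \<le> i"
  shows "det (matrix (\<lambda>h. h + (h $ i0) *\<^sub>R w)) = 1 + w $ i0"
proof -
  let ?A = "matrix (\<lambda>h. h + (h $ i0) *\<^sub>R w)"
  have A: "?A $ i $ j = (if i = j then 1 else 0) + (if j = i0 then w $ i else 0)" for i j
    by (simp add: matrix_def axis_def)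
  have "det ?A = prod (\<lambda>i. ?A$i$i) UNIV"
  proof (rule det_lowerdiagonal)
    fix i j :: 'n
    assume "i < j"
    then have "j \<noteq> i0" "i \<noteq> j" using least[of i] by auto
    then show "?A $ i $ j = 0" by (simp add: A)
  qed
  also have "\<dots> = prod (\<lambda>i. if i = i0 then 1 + w $ i0 else 1) UNIV"
    by (rule prod.cong) (auto simp: A)
  finally show ?thesis by (simp add: prod.If_cases)
qed

text \<open>Rotating e to a coordinate axis turns the rank one update into a shear.\<close>

lemma det_matrix_rank_one_update:
  fixes e w :: "real^'n::{finite,wellorder}"
  assumes "norm e = 1"
  shows "det (matrix (\<lambda>h. h + (e \<bullet> h) *\<^sub>R w)) = 1 + e \<bullet> w"
proof -
  define i0 where "i0 = (LEAST i. e $ i = e $ i)"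
  have least: "i0 \<le> i" for i unfolding i0_def by (simp add: Least_le)
  define a0 where "a0 = axis i0 (1::real)"
  have "norm a0 = norm e" using assms by (simp add: a0_def)
  then obtain U where U: "orthogonal_transformation U" "U a0 = e"
    using orthogonal_transformation_exists by blast
  define V where "V = inv U"
  have V: "orthogonal_transformation V"
    unfolding V_def using U(1) by (rule orthogonal_transformation_inv)
  have UV: "U (V y) = y" for y
    unfolding V_def using orthogonal_transformation_bij[OF U(1)] by (simp add: bij_def surj_f_inv_f)
  have U_inner: "U y \<bullet> U z = y \<bullet> z" for y z
    using U(1) by (simp add: orthogonal_transformation_def)
  have lU: "linear U" using U(1) by (rule orthogonal_transformation_linear)
  have lV: "linear V" using V by (rule orthogonal_transformation_linear)
  have V_coord: "(V h) $ i0 = e \<bullet> h" for h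
  proof -
    have "(V h) $ i0 = a0 \<bullet> V h" by (simp add: a0_def inner_axis')
    also have "\<dots> = e \<bullet> h" using U_inner[of a0 "V h"] by (simp add: U(2) UV)
    finally show ?thesis .
  qed
  have comp: "(\<lambda>h. h + (e \<bullet> h) *\<^sub>R w) = U \<circ> ((\<lambda>h. h + (h $ i0) *\<^sub>R V w) \<circ> V)"
  proof
    fix h
    have "U (V h + (V h $ i0) *\<^sub>R V w) = U (V h) + (V h $ i0) *\<^sub>R U (V w)"
      using lU by (simp add: linear_add linear_scale)
    then show "h + (e \<bullet> h) *\<^sub>R w = (U \<circ> ((\<lambda>h. h + (h $ i0) *\<^sub>R V w) \<circ> V)) h"
      by (simp add: V_coord UV)
  qed
  have lN: "linear (\<lambda>h. h + (h $ i0) *\<^sub>R V w)"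
    by (auto simp: linear_iff algebra_simps)
  have det_U_V: "det (matrix U) * det (matrix V) = 1"
  proof -
    have "U \<circ> V = id" using UV by auto
    have "det (matrix U) * det (matrix V) = det (matrix U ** matrix V)" by (simp add: det_mul)
    also have "matrix U ** matrix V = matrix (U \<circ> V)" by (simp add: matrix_compose lU lV)
    also have "\<dots> = mat 1" using \<open>U \<circ> V = id\<close> by (simp add: matrix_id_mat_1)
    finally show ?thesis by simp
  qed
  have det_shear: "det (matrix (\<lambda>h. h + (h $ i0) *\<^sub>R V w)) = 1 + e \<bullet> w"
    using det_matrix_shear_least[OF least, of "V w"] V_coord by simp
  have "matrix (\<lambda>h. h + (e \<bullet> h) *\<^sub>R w) =
      matrix U ** (matrix (\<lambda>h. h + (h $ i0) *\<^sub>R V w) ** matrix V)"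
    unfolding comp by (simp add: matrix_compose lU lV lN linear_compose)
  then have "det (matrix (\<lambda>h. h + (e \<bullet> h) *\<^sub>R w)) =
      det (matrix U) * (det (matrix (\<lambda>h. h + (h $ i0) *\<^sub>R V w)) * det (matrix V))"
    by (simp add: det_mul)
  also have "\<dots> = (det (matrix U) * det (matrix V)) * (1 + e \<bullet> w)"
    unfolding det_shear by (simp add: algebra_simps)
  finally show ?thesis unfolding det_U_V by simp
qed

lemma abs_det_scaled_householder_plus_rank_one:
  fixes v e a :: "real^'n::{finite,wellorder}"
  assumes "norm v = 1" and "norm e = 1" and "\<mu> > 0"
  shows "\<bar>det (matrix (\<lambda>h. \<mu> *\<^sub>R householder v h + (e \<bullet> h) *\<^sub>R a))\<bar> =
    \<mu> ^ CARD('n) * \<bar>1 + (e \<bullet> householder v a) / \<mu>\<bar>"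
proof -
  define w where "w = (1/\<mu>) *\<^sub>R householder v a"
  have "(\<lambda>h. \<mu> *\<^sub>R householder v h + (e \<bullet> h) *\<^sub>R a) =
      (\<lambda>h. \<mu> *\<^sub>R h) \<circ> householder v \<circ> (\<lambda>h. h + (e \<bullet> h) *\<^sub>R w)"
    using assms(1,3) by (simp add: fun_eq_iff w_def householder_add householder_scaleR
        householder_householder scaleR_add_right)
  moreover have "linear (\<lambda>h. h + (e \<bullet> h) *\<^sub>R w)"
    by (auto simp: linear_iff algebra_simps inner_add_right)
  moreover have "linear (\<lambda>h. \<mu> *\<^sub>R h)" by (auto simp: linear_iff algebra_simps)
  ultimately have "det (matrix (\<lambda>h. \<mu> *\<^sub>R householder v h + (e \<bullet> h) *\<^sub>R a)) =
      \<mu> ^ CARD('n) * det (matrix (householder v)) * (1 + e \<bullet> w)"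
    by (simp add: matrix_compose linear_householder linear_compose det_mul
        det_matrix_scaleR det_matrix_rank_one_update[OF assms(2)])
  moreover have "\<bar>det (matrix (householder v))\<bar> = 1"
    using orthogonal_transformation_householder[OF assms(1)] by simp
  ultimately show ?thesis
    using assms(3) by (simp add: abs_mult w_def)
qed

lemma abs_det_cone_inversion_deriv:
  fixes z p :: "real^'n::{finite,wellorder}"
  assumes "sphere_inversion p c R" and "z \<noteq> 0"
  shows "\<bar>det (matrix (cone_inversion_deriv p c R z))\<bar> =
    inversion_scale p c (radial_proj R z) ^ (CARD('n) - 1)"
proof -
  interpret sphere_inversion p c R by fact
  define u where "u = radial_proj R z"
  define \<mu> where "\<mu> = inversion_scale p c u"
  define v where "v = sgn (u - p)"
  define e where "e = sgn z"
  define a where "a = (1/R) *\<^sub>R inversion p c u - \<mu> *\<^sub>R householder v e"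
  have u: "norm u = R" unfolding u_def using assms(2) radius_pos by (simp add: norm_radial_proj)
  have "\<mu> > 0" unfolding \<mu>_def using inversion_scale_pos[OF u] .
  have v: "norm v = 1" unfolding v_def using sphere_ne_pole[OF u] by (simp add: norm_sgn)
  have e: "norm e = 1" unfolding e_def using assms(2) by (simp add: norm_sgn)
  have "e \<bullet> householder v a = (1/R) * (e \<bullet> householder v (inversion p c u)) - \<mu> * (e \<bullet> e)"
    unfolding a_def using v
    by (simp add: householder_diff householder_scaleR householder_householder inner_diff_right)
  also have "e \<bullet> householder v (inversion p c u) = R"
  proof -
    have "e = (1/R) *\<^sub>R u"
      unfolding e_def u_def radial_proj_def sgn_div_norm using radius_pos by (simp add: divide_inverse)
    then show ?thesis
      unfolding v_def using inner_householder_inversion[OF u power_def sphere_ne_pole[OF u]] radius_pos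
      by (simp add: power2_eq_square)
  qed
  also have "e \<bullet> e = 1" using e by (simp add: dot_square_norm)
  finally have "1 + (e \<bullet> householder v a) / \<mu> = 1 / \<mu>"
    using \<open>\<mu> > 0\<close> radius_pos by (simp add: field_simps)
  moreover have "cone_inversion_deriv p c R z = (\<lambda>h. \<mu> *\<^sub>R householder v h + (e \<bullet> h) *\<^sub>R a)"
    by (simp add: fun_eq_iff cone_inversion_deriv_def Let_def u_def[symmetric] \<mu>_def[symmetric]
        v_def[symmetric] e_def[symmetric] a_def[symmetric])
  ultimately have "\<bar>det (matrix (cone_inversion_deriv p c R z))\<bar> = \<mu> ^ CARD('n) / \<mu>"
    using abs_det_scaled_householder_plus_rank_one[OF v e \<open>\<mu> > 0\<close>, of a] \<open>\<mu> > 0\<close> by simp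
  also have "\<dots> = \<mu> ^ (CARD('n) - 1)"
    using \<open>\<mu> > 0\<close> by (simp add: power_diff)
  finally show ?thesis unfolding \<mu>_def u_def .
qed

context sphere_inversion
begin

lemma norm_cone_inversion: "z \<noteq> 0 \<Longrightarrow> norm (cone_inversion p c R z) = norm z"
  using norm_inversion[OF norm_radial_proj[OF _ radius_pos]] radius_pos by (simp add: cone_inversion_def)

lemma radial_proj_cone_inversion:
  assumes "z \<noteq> 0"
  shows "radial_proj R (cone_inversion p c R z) = inversion p c (radial_proj R z)"
  unfolding radial_proj_def[of R "cone_inversion p c R z"] norm_cone_inversion[OF assms]
  using assms radius_pos by (simp add: cone_inversion_def)

lemma cone_inversion_involutive:
  assumes "z \<noteq> 0"
  shows "cone_inversion p c R (cone_inversion p c R z) = z"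
proof -
  have "cone_inversion p c R (cone_inversion p c R z) =
      (norm z / R) *\<^sub>R inversion p c (inversion p c (radial_proj R z))"
    unfolding cone_inversion_def[of p c R "cone_inversion p c R z"] norm_cone_inversion[OF assms]
      radial_proj_cone_inversion[OF assms] by (rule refl)
  also have "\<dots> = z"
    using inversion_involutive[OF norm_radial_proj[OF assms radius_pos]] assms radius_pos
    by (simp add: radial_proj_def)
  finally show ?thesis .
qed

lemma cone_inversion_image: "cone_inversion p c R ` (cball 0 R - {0}) = cball 0 R - {0}"
proof
  show "cone_inversion p c R ` (cball 0 R - {0}) \<subseteq> cball 0 R - {0}"
    using norm_cone_inversion by fastforce
  show "cball 0 R - {0} \<subseteq> cone_inversion p c R ` (cball 0 R - {0})"
  proof
    fix z :: 'a
    assume z: "z \<in> cball 0 R - {0}"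
    then have "z = cone_inversion p c R (cone_inversion p c R z)"
      by (simp add: cone_inversion_involutive)
    moreover have "cone_inversion p c R z \<in> cball 0 R - {0}"
      using z norm_cone_inversion[of z] by auto
    ultimately show "z \<in> cone_inversion p c R ` (cball 0 R - {0})" by blast
  qed
qed

lemma inj_on_cone_inversion: "inj_on (cone_inversion p c R) (cball 0 R - {0})"
  by (rule inj_on_inverseI[where g = "cone_inversion p c R"]) (auto simp: cone_inversion_involutive)

end

lemma has_absolute_integral_change_of_variables_real_valued:
  fixes f :: "real^'n::{finite,wellorder} \<Rightarrow> real" and g :: "real^'n::_ \<Rightarrow> real^'n::_"
  assumes "S \<in> sets lebesgue"
    and "\<And>x. x \<in> S \<Longrightarrow> (g has_derivative g' x) (at x within S)"
    and "inj_on g S"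
  shows "(\<lambda>x. \<bar>det (matrix (g' x))\<bar> * f (g x)) absolutely_integrable_on S \<and>
           integral S (\<lambda>x. \<bar>det (matrix (g' x))\<bar> * f (g x)) = b
     \<longleftrightarrow> f absolutely_integrable_on (g ` S) \<and> integral (g ` S) f = b"
proof -
  have "(\<lambda>x. \<bar>det (matrix (g' x))\<bar> *\<^sub>R vec (f (g x)) :: real^1) absolutely_integrable_on S \<and>
           integral S (\<lambda>x. \<bar>det (matrix (g' x))\<bar> *\<^sub>R vec (f (g x))) = (vec b :: real^1)
     \<longleftrightarrow> (\<lambda>y. vec (f y) :: real^1) absolutely_integrable_on (g ` S) \<and>
           integral (g ` S) (\<lambda>y. vec (f y)) = (vec b :: real^1)"
    by (rule has_absolute_integral_change_of_variables[OF assms])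
  then show ?thesis
    by (simp add: absolutely_integrable_on_1_iff integral_on_1_eq vec_scaleR)
qed

lemma set_integrable_bounded_continuous_on:
  fixes H :: "'a::euclidean_space \<Rightarrow> real"
  assumes "continuous_on S H" and "S \<in> sets borel" and "bounded S"
    and "\<And>x. x \<in> S \<Longrightarrow> \<bar>H x\<bar> \<le> B"
  shows "set_integrable lebesgue S H"
proof -
  have "S \<in> sets lebesgue" using assms(2) by auto
  moreover from this have "S \<in> lmeasurable" using assms(3) by (rule bounded_set_imp_lmeasurable[rotated])
  ultimately show ?thesis
    by (intro measurable_bounded_by_integrable_imp_absolutely_integrable[where g = "\<lambda>_. B"])
      (use continuous_imp_measurable_on_sets_lebesgue[OF assms(1)] integrable_on_const assms(4) in auto)
qed

lemma set_lebesgue_integral_eq_lborel_indicator: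
  fixes H :: "'a::euclidean_space \<Rightarrow> real"
  assumes "continuous_on S H" and "S \<in> sets borel"
  shows "(LINT x:S|lebesgue. H x) = integral\<^sup>L lborel (\<lambda>x. indicator S x * H x)"
proof -
  have "(\<lambda>x. indicator S x *\<^sub>R H x) \<in> borel_measurable lborel"
    using borel_measurable_continuous_on_indicator[OF assms(2,1)] by (simp add: measurable_lborel1)
  from integral_completion[OF this] show ?thesis
    unfolding set_lebesgue_integral_def by simp
qed

lemma set_integrable_comp_radial_proj:
  fixes G :: "'a::euclidean_space \<Rightarrow> real"
  assumes "continuous_on (sphere 0 R) G" and "R > 0"
  shows "set_integrable lebesgue (cball 0 R - {0}) (\<lambda>z. G (radial_proj R z))"
proof -
  obtain B where "\<forall>u\<in>sphere 0 R. \<bar>G u\<bar> \<le> B"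
    using compact_imp_bounded[OF compact_continuous_image[OF assms(1) compact_sphere]]
    unfolding bounded_iff by auto
  then show ?thesis
    using assms(2) by (intro set_integrable_bounded_continuous_on[where B = B]
        continuous_on_comp_radial_proj assms) (auto simp: norm_radial_proj)
qed

text \<open>Up to the factor DIM('a)/R, the integral of G against sphere_measure R.\<close>

definition cone_integral ::
    "real \<Rightarrow> ('a::euclidean_space \<Rightarrow> 'b::{banach,second_countable_topology}) \<Rightarrow> 'b" where
  "cone_integral R G = integral\<^sup>L lborel (\<lambda>z. indicator (cball 0 R - {0}) z *\<^sub>R G (radial_proj R z))"

lemma cone_integral_eq_set_integral:
  fixes G :: "'a::euclidean_space \<Rightarrow> real"
  assumes "continuous_on (sphere 0 R) G" and "R > 0"
  shows "cone_integral R G = (LINT z:cball 0 R - {0}|lebesgue. G (radial_proj R z))"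
  unfolding cone_integral_def
  by (subst set_lebesgue_integral_eq_lborel_indicator[OF continuous_on_comp_radial_proj[OF assms]]) auto

lemma cone_integral_inversion_cart:
  fixes p :: "real^'n::{finite,wellorder}" and G :: "real^'n::_ \<Rightarrow> real"
  assumes "sphere_inversion p c R" and G: "continuous_on (sphere 0 R) G"
  shows "cone_integral R G =
    cone_integral R (\<lambda>u. inversion_scale p c u ^ (CARD('n) - 1) * G (inversion p c u))"
proof -
  interpret sphere_inversion p c R by fact
  define S :: "(real^'n::_) set" where "S = cball 0 R - {0}"
  have "continuous_on (sphere 0 R) (\<lambda>u. inversion_scale p c u ^ (CARD('n) - 1) * G (inversion p c u))"
    by (intro continuous_intros continuous_on_inversion_scale
        continuous_on_compose2[OF G continuous_on_inversion]) (auto simp: norm_inversion)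
  then have "cone_integral R (\<lambda>u. inversion_scale p c u ^ (CARD('n) - 1) * G (inversion p c u)) =
      (LINT z:S|lebesgue. inversion_scale p c (radial_proj R z) ^ (CARD('n) - 1) *
        G (inversion p c (radial_proj R z)))"
    unfolding S_def using radius_pos by (rule cone_integral_eq_set_integral)
  also have "\<dots> = (LINT z:S|lebesgue. \<bar>det (matrix (cone_inversion_deriv p c R z))\<bar> *
      G (radial_proj R (cone_inversion p c R z)))"
    by (rule set_lebesgue_integral_cong)
      (auto simp: S_def abs_det_cone_inversion_deriv[OF assms(1)] radial_proj_cone_inversion)
  also have "\<dots> = (LINT z:cone_inversion p c R ` S|lebesgue. G (radial_proj R z))"
  proof -
    have "z \<in> S \<Longrightarrow> (cone_inversion p c R has_derivative cone_inversion_deriv p c R z) (at z within S)" for z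
      using has_derivative_cone_inversion[of z R p c] radius_pos sphere_ne_pole[OF norm_radial_proj]
      by (auto simp: S_def intro: has_derivative_at_withinI)
    note change = has_absolute_integral_change_of_variables_real_valued[OF _ this
        inj_on_cone_inversion[folded S_def]]
    have "(\<lambda>z. G (radial_proj R z)) absolutely_integrable_on cone_inversion p c R ` S"
      using set_integrable_comp_radial_proj[OF G radius_pos] cone_inversion_image by (simp add: S_def)
    with change[of "\<lambda>z. G (radial_proj R z)"]
    have "(\<lambda>z. \<bar>det (matrix (cone_inversion_deriv p c R z))\<bar> * G (radial_proj R (cone_inversion p c R z)))
        absolutely_integrable_on S \<and>
      integral S (\<lambda>z. \<bar>det (matrix (cone_inversion_deriv p c R z))\<bar> * G (radial_proj R (cone_inversion p c R z)))
        = integral (cone_inversion p c R ` S) (\<lambda>z. G (radial_proj R z))"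
      by (auto simp: S_def)
    with \<open>(\<lambda>z. G (radial_proj R z)) absolutely_integrable_on cone_inversion p c R ` S\<close>
    show ?thesis by (simp add: set_lebesgue_integral_eq_integral)
  qed
  also have "\<dots> = cone_integral R G"
    using cone_integral_eq_set_integral[OF G radius_pos] by (simp add: S_def cone_inversion_image)
  finally show ?thesis ..
qed

text \<open>
  The change of variables theorem of the library is stated for real^'n; to use it on an
  arbitrary Euclidean space we identify it with real^('a basis_index) via coordinates.
\<close>

typedef (overloaded) ('a::euclidean_space) basis_index = "Basis :: 'a set"
  using nonempty_Basis by blast

instance basis_index :: (euclidean_space) finite
proof
  have "finite (Rep_basis_index ` (UNIV :: 'a basis_index set))"
    by (rule finite_subset[of _ Basis]) (use Rep_basis_index in auto)
  then show "finite (UNIV :: 'a basis_index set)"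
    by (rule finite_imageD) (simp add: inj_on_def Rep_basis_index_inject)
qed

definition basis_num :: "'a::euclidean_space basis_index \<Rightarrow> nat" where
  "basis_num i = to_nat_on (Basis :: 'a set) (Rep_basis_index i)"

lemma basis_num_inject: "basis_num i = basis_num j \<Longrightarrow> i = j"
proof -
  assume "basis_num i = basis_num j"
  moreover have "inj_on (to_nat_on (Basis :: 'a set)) Basis"
    by (intro inj_on_to_nat_on countable_finite) simp
  ultimately show "i = j"
    unfolding basis_num_def using Rep_basis_index Rep_basis_index_inject by (metis inj_onD)
qed

instantiation basis_index :: (euclidean_space) linorder
begin

definition less_eq_basis_index :: "'a basis_index \<Rightarrow> 'a basis_index \<Rightarrow> bool" where
  "less_eq_basis_index i j \<longleftrightarrow> basis_num i \<le> basis_num j"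

definition less_basis_index :: "'a basis_index \<Rightarrow> 'a basis_index \<Rightarrow> bool" where
  "less_basis_index i j \<longleftrightarrow> basis_num i < basis_num j"

instance
  by standard (auto simp: less_eq_basis_index_def less_basis_index_def intro: basis_num_inject)

end

instance basis_index :: (euclidean_space) wellorder
proof
  fix P :: "'a basis_index \<Rightarrow> bool" and a
  assume step: "\<And>x. (\<And>y. y < x \<Longrightarrow> P y) \<Longrightarrow> P x"
  have "\<And>x. basis_num x = n \<Longrightarrow> P x" for n
    by (induct n rule: less_induct) (metis less_basis_index_def step)
  then show "P a" by blast
qed

definition to_cart :: "'a::euclidean_space \<Rightarrow> real^('a basis_index)" where
  "to_cart y = (\<chi> i. y \<bullet> Rep_basis_index i)"

definition from_cart :: "real^('a basis_index) \<Rightarrow> 'a::euclidean_space" where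
  "from_cart v = (\<Sum>i\<in>UNIV. (v $ i) *\<^sub>R Rep_basis_index i)"

lemma bij_betw_Rep_basis_index: "bij_betw Rep_basis_index UNIV Basis"
  by (metis Rep_basis_index_inverse Rep_basis_index type_definition.Rep_range
      type_definition_basis_index bij_betw_def inj_on_def)

lemma CARD_basis_index: "CARD('a::euclidean_space basis_index) = DIM('a)"
  using bij_betw_same_card[OF bij_betw_Rep_basis_index] by simp

lemma sum_Basis_eq_sum_basis_index:
  "(\<Sum>b\<in>(Basis::'a::euclidean_space set). f b) = (\<Sum>i\<in>UNIV. f (Rep_basis_index i))"
  using sum.reindex_bij_betw[OF bij_betw_Rep_basis_index, of f] by simp

lemma prod_Basis_eq_prod_basis_index:
  "(\<Prod>b\<in>(Basis::'a::euclidean_space set). f b) = (\<Prod>i\<in>UNIV. f (Rep_basis_index i))"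
  using prod.reindex_bij_betw[OF bij_betw_Rep_basis_index, of f] by simp

lemma inner_from_cart_Rep: "from_cart v \<bullet> Rep_basis_index i = v $ i"
proof -
  have "from_cart v \<bullet> Rep_basis_index i = (\<Sum>j\<in>UNIV. v $ j * (Rep_basis_index j \<bullet> Rep_basis_index i))"
    by (simp add: from_cart_def inner_sum_left)
  also have "\<dots> = (\<Sum>j\<in>UNIV. if j = i then v $ j else 0)"
    by (rule sum.cong) (auto simp: inner_Basis Rep_basis_index Rep_basis_index_inject)
  finally show ?thesis by simp
qed

lemma to_cart_from_cart [simp]: "to_cart (from_cart v) = v"
  by (simp add: to_cart_def inner_from_cart_Rep vec_eq_iff)

lemma from_cart_to_cart [simp]: "from_cart (to_cart y) = y"
proof -
  have "from_cart (to_cart y) = (\<Sum>i\<in>UNIV. (y \<bullet> Rep_basis_index i) *\<^sub>R Rep_basis_index i)"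
    by (simp add: from_cart_def to_cart_def)
  also have "\<dots> = (\<Sum>b\<in>Basis. (y \<bullet> b) *\<^sub>R b)" by (rule sum_Basis_eq_sum_basis_index[symmetric])
  finally show ?thesis by (simp add: euclidean_representation)
qed

lemma inner_to_cart: "to_cart x \<bullet> to_cart y = x \<bullet> y"
proof -
  have "to_cart x \<bullet> to_cart y = (\<Sum>i\<in>UNIV. (x \<bullet> Rep_basis_index i) * (y \<bullet> Rep_basis_index i))"
    by (simp add: to_cart_def inner_vec_def)
  also have "\<dots> = (\<Sum>b\<in>Basis. (x \<bullet> b) * (y \<bullet> b))" by (rule sum_Basis_eq_sum_basis_index[symmetric])
  also have "\<dots> = x \<bullet> y" by (rule euclidean_inner[symmetric])
  finally show ?thesis .
qed

lemma norm_to_cart [simp]: "norm (to_cart x) = norm x"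
  by (simp add: norm_eq_sqrt_inner inner_to_cart)

lemma norm_from_cart [simp]: "norm (from_cart v) = norm v"
  by (metis to_cart_from_cart norm_to_cart)

lemma to_cart_add: "to_cart (x + y) = to_cart x + to_cart y"
  and to_cart_scaleR: "to_cart (t *\<^sub>R x) = t *\<^sub>R to_cart x"
  by (simp_all add: to_cart_def vec_eq_iff inner_add_left)

lemma from_cart_add: "from_cart (v + w) = from_cart v + from_cart w"
  and from_cart_scaleR: "from_cart (t *\<^sub>R v) = t *\<^sub>R from_cart v"
  and from_cart_diff: "from_cart (v - w) = from_cart v - from_cart w"
  by (simp_all add: from_cart_def sum.distrib scaleR_add_left scaleR_diff_left sum_subtractf
      scaleR_sum_right)

lemma linear_to_cart: "linear to_cart"
  by (auto simp: linear_iff to_cart_add to_cart_scaleR)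

lemma to_cart_eq_0_iff [simp]: "to_cart z = 0 \<longleftrightarrow> z = 0"
  by (metis norm_to_cart norm_eq_zero)

lemma ball_Basis_eq_all_basis_index:
  "(\<forall>b\<in>(Basis::'a::euclidean_space set). P b) \<longleftrightarrow> (\<forall>i. P (Rep_basis_index i))"
  by (metis Rep_basis_index Rep_basis_index_cases)

lemma Basis_vec_eq_range_axis: "(Basis :: (real^'n) set) = range (\<lambda>i. axis i 1)"
  unfolding Basis_vec_def by auto

lemma to_cart_vimage_box: "to_cart -` box l u = box (from_cart l) (from_cart u)"
proof -
  have "y \<in> box (from_cart l) (from_cart u) \<longleftrightarrow>
      (\<forall>i. l $ i < y \<bullet> Rep_basis_index i \<and> y \<bullet> Rep_basis_index i < u $ i)" for y
    unfolding mem_box ball_Basis_eq_all_basis_index by (simp add: inner_from_cart_Rep)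
  moreover have "to_cart y \<in> box l u \<longleftrightarrow>
      (\<forall>i. l $ i < y \<bullet> Rep_basis_index i \<and> y \<bullet> Rep_basis_index i < u $ i)" for y
    unfolding mem_box Basis_vec_eq_range_axis by (auto simp: to_cart_def inner_axis)
  ultimately show ?thesis by auto
qed

lemma borel_measurable_to_cart: "to_cart \<in> borel_measurable (lborel :: 'a::euclidean_space measure)"
proof -
  have "continuous_on UNIV to_cart"
    by (rule linear_continuous_on) (simp add: linear_to_cart linear_conv_bounded_linear[symmetric])
  from borel_measurable_continuous_onI[OF this] show ?thesis by (simp add: measurable_lborel1)
qed

lemma distr_lborel_to_cart: "distr lborel borel (to_cart :: 'a::euclidean_space \<Rightarrow> _) = lborel"
proof (rule lborel_eqI[symmetric])
  fix l u :: "real^('a basis_index)"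
  assume le: "\<And>b. b \<in> Basis \<Longrightarrow> l \<bullet> b \<le> u \<bullet> b"
  have "\<forall>b\<in>Basis. from_cart l \<bullet> b \<le> from_cart u \<bullet> b"
    unfolding ball_Basis_eq_all_basis_index
    using le[of "axis _ 1"] by (auto simp: inner_from_cart_Rep Basis_vec_eq_range_axis inner_axis)
  then have "emeasure lborel (box (from_cart l) (from_cart u) :: 'a set) =
      (\<Prod>i\<in>UNIV. (u - l) $ i)"
    by (simp add: emeasure_lborel_box_eq prod_Basis_eq_prod_basis_index inner_diff_left inner_from_cart_Rep)
  also have "\<dots> = (\<Prod>b\<in>Basis. (u - l) \<bullet> b)"
    unfolding Basis_vec_eq_range_axis
    by (subst prod.reindex) (auto simp: inj_on_def axis_eq_axis inner_axis)
  finally show "emeasure (distr lborel borel to_cart) (box l u) = (\<Prod>b\<in>Basis. (u - l) \<bullet> b)"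
    by (simp add: emeasure_distr[OF borel_measurable_to_cart] to_cart_vimage_box)
qed simp

lemma integral_lborel_to_cart:
  fixes h :: "real^('a::euclidean_space basis_index) \<Rightarrow> 'b::{banach,second_countable_topology}"
  assumes "h \<in> borel_measurable borel"
  shows "integral\<^sup>L lborel (\<lambda>z::'a. h (to_cart z)) = integral\<^sup>L lborel h"
  using integral_distr[OF borel_measurable_to_cart assms] by (simp add: distr_lborel_to_cart)

lemma inversion_scale_to_cart: "inversion_scale (to_cart p) c v = inversion_scale p c (from_cart v)"
proof -
  have "norm (v - to_cart p) = norm (from_cart v - p)"
    by (metis from_cart_diff from_cart_to_cart norm_from_cart)
  then show ?thesis by (simp add: inversion_scale_def)
qed

lemma from_cart_inversion: "from_cart (inversion (to_cart p) c v) = inversion p c (from_cart v)"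
  by (simp add: inversion_def inversion_scale_to_cart from_cart_add from_cart_scaleR from_cart_diff)

lemma sphere_inversion_to_cart: "sphere_inversion p c R \<Longrightarrow> sphere_inversion (to_cart p) c R"
  by (simp add: sphere_inversion_def)

lemma continuous_on_comp_from_cart:
  assumes "continuous_on (sphere 0 R) G"
  shows "continuous_on (sphere 0 R) (\<lambda>v. G (from_cart v))"
proof (rule continuous_on_compose2[OF assms])
  show "continuous_on (sphere 0 R) from_cart"
    unfolding from_cart_def[abs_def] by (intro continuous_intros)
qed auto

lemma cone_integral_to_cart:
  fixes G :: "'a::euclidean_space \<Rightarrow> real"
  assumes G: "continuous_on (sphere 0 R) G" and "R > 0"
  shows "cone_integral R G = cone_integral R (\<lambda>v. G (from_cart v))"
proof -
  have "continuous_on (cball 0 R - {0}) (\<lambda>w. G (from_cart (radial_proj R w)))"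
    by (rule continuous_on_comp_radial_proj[OF continuous_on_comp_from_cart[OF G] assms(2)])
  then have "(\<lambda>w. indicator (cball 0 R - {0}) w *\<^sub>R G (from_cart (radial_proj R w))) \<in> borel_measurable borel"
    by (intro borel_measurable_continuous_on_indicator) auto
  from integral_lborel_to_cart[OF this] show ?thesis
    unfolding cone_integral_def
    by (simp add: radial_proj_def from_cart_scaleR indicator_def)
qed

lemma cone_integral_inversion:
  fixes p :: "'a::euclidean_space" and G :: "'a \<Rightarrow> real"
  assumes "sphere_inversion p c R" and G: "continuous_on (sphere 0 R) G"
  shows "cone_integral R G = cone_integral R (\<lambda>u. inversion_scale p c u ^ (DIM('a) - 1) * G (inversion p c u))"
    (is "_ = cone_integral R ?H")
proof -
  interpret sphere_inversion p c R by fact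
  have H: "continuous_on (sphere 0 R) ?H"
    by (intro continuous_intros continuous_on_inversion_scale
        continuous_on_compose2[OF G continuous_on_inversion]) (auto simp: norm_inversion)
  have "cone_integral R G = cone_integral R (\<lambda>v. G (from_cart v))"
    by (rule cone_integral_to_cart[OF G radius_pos])
  also have "\<dots> = cone_integral R (\<lambda>v. inversion_scale (to_cart p) c v ^ (CARD('a basis_index) - 1) *
      G (from_cart (inversion (to_cart p) c v)))"
    by (rule cone_integral_inversion_cart[OF sphere_inversion_to_cart[OF assms(1)]
          continuous_on_comp_from_cart[OF G]])
  also have "\<dots> = cone_integral R (\<lambda>v. ?H (from_cart v))"
    by (simp only: from_cart_inversion inversion_scale_to_cart CARD_basis_index)
  also have "\<dots> = cone_integral R ?H"
    by (rule cone_integral_to_cart[symmetric, OF H radius_pos])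
  finally show ?thesis .
qed

lemma space_sphere_measure [simp]: "space (sphere_measure R :: 'a::euclidean_space measure) = sphere 0 R"
  by (simp add: sphere_measure_def space_scale_measure space_restrict_space)

lemma sets_sphere_measure:
  "sets (sphere_measure R :: 'a::euclidean_space measure) = sets (restrict_space borel (sphere 0 R))"
  by (simp add: sphere_measure_def)

lemma measurable_radial_proj:
  assumes "R > 0"
  shows "radial_proj R \<in> measurable (restrict_space lborel (cball 0 R - {0})) (restrict_space borel (sphere 0 R))"
proof (rule measurable_restrict_space2)
  show "radial_proj R \<in> space (restrict_space lborel (cball 0 R - {0})) \<rightarrow> sphere 0 R"
    using assms by (auto simp: space_restrict_space norm_radial_proj)
  have "radial_proj R \<in> borel_measurable (restrict_space borel (cball 0 R - {0}))"
    by (rule borel_measurable_continuous_on_restrict[OF continuous_on_radial_proj])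
  then show "radial_proj R \<in> borel_measurable (restrict_space lborel (cball 0 R - {0}))"
    by (subst measurable_cong_sets[OF sets_restrict_space_cong[OF sets_lborel] refl])
qed

lemma integral_sphere_measure:
  fixes g :: "'a::euclidean_space \<Rightarrow> 'b::{banach,second_countable_topology}"
  assumes "R > 0" and g: "continuous_on (sphere 0 R) g"
  shows "integral\<^sup>L (sphere_measure R) g = (real DIM('a) / R) *\<^sub>R cone_integral R g"
proof -
  define S :: "'a set" where "S = cball 0 R - {0}"
  define M where "M = distr (restrict_space lborel S) (restrict_space borel (sphere 0 R)) (radial_proj R)"
  have "sphere_measure R = density M (\<lambda>_. ennreal (real DIM('a) / R))"
    unfolding sphere_measure_def M_def S_def radial_proj_def[abs_def]
    by (rule measure_eqI) (auto simp: emeasure_density_const)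
  moreover have g_meas: "g \<in> borel_measurable (restrict_space borel (sphere 0 R))"
    by (rule borel_measurable_continuous_on_restrict[OF g])
  ultimately have "integral\<^sup>L (sphere_measure R) g = (real DIM('a) / R) *\<^sub>R integral\<^sup>L M g"
    using assms(1) by (simp add: integral_density M_def)
  also have "integral\<^sup>L M g = integral\<^sup>L (restrict_space lborel S) (\<lambda>z. g (radial_proj R z))"
    unfolding M_def S_def by (rule integral_distr[OF measurable_radial_proj[OF assms(1)] g_meas])
  also have "\<dots> = cone_integral R g"
    unfolding cone_integral_def S_def by (rule integral_restrict_space) simp
  finally show ?thesis .
qed

lemma finite_measure_sphere_measure:
  assumes "R > 0"
  shows "finite_measure (sphere_measure R :: 'a::euclidean_space measure)"
proof (rule finite_measureI)
  define S :: "'a set" where "S = cball 0 R - {0}"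
  have "emeasure (sphere_measure R :: 'a measure) (space (sphere_measure R)) = ennreal (real DIM('a) / R) *
      emeasure (distr (restrict_space lborel S) (restrict_space borel (sphere 0 R)) (radial_proj R)) (sphere 0 R)"
    by (simp add: sphere_measure_def radial_proj_def[abs_def] S_def space_scale_measure)
  also have "emeasure (distr (restrict_space lborel S) (restrict_space borel (sphere 0 R)) (radial_proj R))
      (sphere 0 R) = emeasure (restrict_space lborel S) (radial_proj R -` sphere 0 R \<inter> space (restrict_space lborel S))"
    unfolding S_def by (rule emeasure_distr[OF measurable_radial_proj[OF assms]]) (simp add: sets_restrict_space_iff)
  also have "radial_proj R -` sphere 0 R \<inter> space (restrict_space lborel S) = S"
    using assms by (auto simp: S_def space_restrict_space norm_radial_proj)
  also have "emeasure (restrict_space lborel S) S = emeasure lborel S"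
    by (simp add: emeasure_restrict_space S_def)
  finally have "emeasure (sphere_measure R :: 'a measure) (space (sphere_measure R)) =
      ennreal (real DIM('a) / R) * emeasure lborel S" .
  moreover have "emeasure lborel S < \<infinity>"
    by (rule le_less_trans[OF emeasure_mono[of S "cball 0 R"] emeasure_lborel_cball_finite])
      (auto simp: S_def)
  ultimately show "emeasure (sphere_measure R :: 'a measure) (space (sphere_measure R)) \<noteq> \<infinity>"
    by (simp add: ennreal_mult_eq_top_iff)
qed

lemma integrable_sphere_measure:
  fixes f :: "'a::euclidean_space \<Rightarrow> 'b::{banach,second_countable_topology}"
  assumes "R > 0" and f: "continuous_on (sphere 0 R) f"
  shows "integrable (sphere_measure R) f"
proof -
  interpret finite_measure "sphere_measure R :: 'a measure"
    by (rule finite_measure_sphere_measure[OF assms(1)])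
  obtain B where "\<forall>u\<in>sphere 0 R. norm (f u) \<le> B"
    using compact_imp_bounded[OF compact_continuous_image[OF f compact_sphere]]
    unfolding bounded_iff by auto
  moreover have "f \<in> borel_measurable (sphere_measure R)"
    using borel_measurable_continuous_on_restrict[OF f]
    by (simp add: measurable_cong_sets[OF sets_sphere_measure refl])
  ultimately show ?thesis
    by (intro integrable_const_bound[where B = B] AE_I2) auto
qed

theorem integral_sphere_measure_inversion:
  fixes p :: "'a::euclidean_space" and g :: "'a \<Rightarrow> real"
  assumes "sphere_inversion p c R" and g: "continuous_on (sphere 0 R) g"
  shows "integral\<^sup>L (sphere_measure R) g =
    integral\<^sup>L (sphere_measure R) (\<lambda>u. inversion_scale p c u ^ (DIM('a) - 1) * g (inversion p c u))"
proof -
  interpret sphere_inversion p c R by fact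
  have "continuous_on (sphere 0 R) (\<lambda>u. inversion_scale p c u ^ (DIM('a) - 1) * g (inversion p c u))"
    by (intro continuous_intros continuous_on_inversion_scale
        continuous_on_compose2[OF g continuous_on_inversion]) (auto simp: norm_inversion)
  then show ?thesis
    using integral_sphere_measure[OF radius_pos] g cone_integral_inversion[OF assms(1) g] by metis
qed

section \<open>Integrals of powers of omega\<close>

lemma omega_pos:
  assumes "norm y = R" and "norm x \<noteq> R"
  shows "omega x y > 0"
proof -
  have "(norm x)\<^sup>2 \<noteq> (norm y)\<^sup>2" using assms by (metis norm_ge_zero power2_eq_imp_eq)
  moreover have "x \<noteq> y" using assms by auto
  ultimately show ?thesis unfolding omega_def by simp
qed

lemma omega_pos_sphere: "norm x \<noteq> R \<Longrightarrow> y \<in> sphere 0 R \<Longrightarrow> omega x y > 0"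
  by (simp add: omega_pos)

lemma continuous_on_omega: "norm x \<noteq> R \<Longrightarrow> continuous_on (sphere 0 R) (omega x)"
  unfolding omega_def[abs_def] by (intro continuous_intros) auto

lemma continuous_on_omega_powr_comp_ln:
  assumes "norm x \<noteq> R" and h: "continuous_on UNIV h"
  shows "continuous_on (sphere 0 R) (\<lambda>y. omega x y powr s * h (ln (omega x y)))"
proof -
  have pos: "\<forall>y\<in>sphere 0 R. omega x y > 0"
    using omega_pos_sphere[OF assms(1)] by blast
  have ln: "continuous_on (sphere 0 R) (\<lambda>y. ln (omega x y))"
    using assms(1) pos by (intro continuous_on_ln continuous_on_omega) auto
  show ?thesis
    using assms(1) pos by (intro continuous_intros continuous_on_omega continuous_on_compose2[OF h ln]) auto
qed

lemma power_mult_powr_inverse_half: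
  fixes w :: real
  assumes "w > 0"
  shows "w ^ k * ((1/w) powr (real k / 2) * h (ln (1/w))) = w powr (real k / 2) * h (- ln w)"
proof -
  have "w ^ k = w powr (real k / 2) * w powr (real k / 2)"
    using assms by (simp add: powr_realpow[symmetric] powr_add[symmetric])
  moreover have "(1/w) powr (real k / 2) = 1 / w powr (real k / 2)"
    using assms by (simp add: powr_divide)
  ultimately show ?thesis
    using assms by (simp add: ln_div)
qed

theorem integral_omega_reflect_ln:
  fixes x :: "'a::euclidean_space" and h :: "real \<Rightarrow> real"
  assumes "R > 0" and "norm x \<noteq> R" and h: "continuous_on UNIV h"
  shows "integral\<^sup>L (sphere_measure R) (\<lambda>y. omega x y powr (real (DIM('a) - 1) / 2) * h (ln (omega x y))) =
    integral\<^sup>L (sphere_measure R) (\<lambda>y. omega x y powr (real (DIM('a) - 1) / 2) * h (- ln (omega x y)))"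
proof (cases "x = 0")
  case True
  then show ?thesis
    using assms(1) by (intro Bochner_Integration.integral_cong) (auto simp: omega_def)
next
  case False
  obtain p c where inv: "sphere_inversion p c R"
    and omega: "\<And>u. norm u = R \<Longrightarrow> omega x u = inversion_scale p c u"
    using omega_eq_inversion_scale[OF assms(1,2) False] by blast
  interpret sphere_inversion p c R by (rule inv)
  have "integral\<^sup>L (sphere_measure R) (\<lambda>y. omega x y powr (real (DIM('a) - 1) / 2) * h (ln (omega x y))) =
      integral\<^sup>L (sphere_measure R) (\<lambda>u. inversion_scale p c u ^ (DIM('a) - 1) *
        (omega x (inversion p c u) powr (real (DIM('a) - 1) / 2) * h (ln (omega x (inversion p c u)))))"
    by (rule integral_sphere_measure_inversion[OF inv continuous_on_omega_powr_comp_ln[OF assms(2) h]])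
  also have "\<dots> = integral\<^sup>L (sphere_measure R)
      (\<lambda>y. omega x y powr (real (DIM('a) - 1) / 2) * h (- ln (omega x y)))"
  proof (rule Bochner_Integration.integral_cong)
    fix u :: 'a
    assume "u \<in> space (sphere_measure R)"
    then have u: "norm u = R" by simp
    have omega_inversion: "omega x (inversion p c u) = 1 / inversion_scale p c u"
      using omega[OF norm_inversion[OF u]] inversion_scale_involutive[OF u] by simp
    show "inversion_scale p c u ^ (DIM('a) - 1) *
        (omega x (inversion p c u) powr (real (DIM('a) - 1) / 2) * h (ln (omega x (inversion p c u)))) =
        omega x u powr (real (DIM('a) - 1) / 2) * h (- ln (omega x u))"
      unfolding omega_inversion omega[OF u] by (rule power_mult_powr_inverse_half[OF inversion_scale_pos[OF u]])
  qed simp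
  finally show ?thesis .
qed

corollary integral_omega_odd_eq_0:
  fixes x :: "'a::euclidean_space" and h :: "real \<Rightarrow> real"
  assumes "R > 0" and "norm x \<noteq> R" and "continuous_on UNIV h" and "\<And>t. h (- t) = - h t"
  shows "integral\<^sup>L (sphere_measure R) (\<lambda>y. omega x y powr (real (DIM('a) - 1) / 2) * h (ln (omega x y))) = 0"
  using integral_omega_reflect_ln[OF assms(1-3)] by (simp add: assms(4))

lemma cpow_pos_real_imag:
  assumes "w > 0"
  shows "cpow_pos w (complex_of_real s + \<i> * complex_of_real b) =
    complex_of_real (w powr s * cos (b * ln w)) + \<i> * complex_of_real (w powr s * sin (b * ln w))"
proof -
  have "cpow_pos w (complex_of_real s + \<i> * complex_of_real b) =
      exp (complex_of_real (s * ln w)) * exp (\<i> * complex_of_real (b * ln w))"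
    unfolding cpow_pos_def by (simp add: distrib_right exp_add[symmetric] mult.assoc)
  also have "\<dots> = complex_of_real (w powr s) * cis (b * ln w)"
    using assms by (simp add: exp_of_real[symmetric] cis_conv_exp powr_def)
  finally show ?thesis by (simp add: complex_eq_iff)
qed

lemma cpow_pos_sums:
  assumes "w > 0"
  shows "(\<lambda>j. (\<alpha> - complex_of_real s) ^ j / of_nat (fact j) * complex_of_real (w powr s * (ln w) ^ j))
    sums cpow_pos w \<alpha>"
proof -
  define X where "X = (\<alpha> - complex_of_real s) * complex_of_real (ln w)"
  have "complex_of_real (w powr s) * exp X = cpow_pos w \<alpha>"
    using assms unfolding cpow_pos_def X_def
    by (simp add: powr_def exp_of_real[symmetric] exp_add[symmetric] algebra_simps)
  moreover have "(\<lambda>n. complex_of_real (w powr s) * (X ^ n /\<^sub>R fact n)) =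
      (\<lambda>j. (\<alpha> - complex_of_real s) ^ j / of_nat (fact j) * complex_of_real (w powr s * (ln w) ^ j))"
    by (simp add: X_def fun_eq_iff power_mult_distrib scaleR_conv_of_real divide_inverse mult_ac)
  ultimately show ?thesis
    using sums_mult[OF exp_converges, of "complex_of_real (w powr s)" X] by simp
qed

text \<open>Termwise integration of the exponential series, dominated since ln w is bounded.\<close>

lemma sums_integral_cpow_pos:
  fixes w :: "'x \<Rightarrow> real"
  assumes "finite_measure M" and w_meas: "w \<in> borel_measurable M"
    and w_pos: "\<And>y. y \<in> space M \<Longrightarrow> w y > 0"
    and ln_bound: "\<And>y. y \<in> space M \<Longrightarrow> \<bar>ln (w y)\<bar> \<le> L"
  shows "(\<lambda>j. (\<alpha> - complex_of_real s) ^ j / of_nat (fact j) *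
      complex_of_real (\<integral>y. w y powr s * ln (w y) ^ j \<partial>M)) sums (\<integral>y. cpow_pos (w y) \<alpha> \<partial>M)"
proof -
  interpret finite_measure M by fact
  define z where "z = \<alpha> - complex_of_real s"
  define f where "f = (\<lambda>j y. z ^ j / of_nat (fact j) * complex_of_real (w y powr s * ln (w y) ^ j))"
  define P where "P = exp (\<bar>s\<bar> * L)"
  define bound where "bound = (\<lambda>j. P * (inverse (fact j) * (norm z * L) ^ j))"
  have norm_f: "norm (f j y) = \<bar>w y powr s\<bar> * (inverse (fact j) * (norm z * \<bar>ln (w y)\<bar>) ^ j)" for j y
    unfolding f_def
    by (simp add: norm_mult norm_divide norm_power abs_mult power_abs power_mult_distrib field_simps)
  have f_bound: "norm (f j y) \<le> bound j" if y: "y \<in> space M" for j y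
  proof -
    have "\<bar>w y powr s\<bar> = exp (s * ln (w y))" using w_pos[OF y] by (simp add: powr_def)
    also have "\<dots> \<le> P"
    proof -
      have "s * ln (w y) \<le> \<bar>s\<bar> * \<bar>ln (w y)\<bar>" by (metis abs_ge_self abs_mult)
      also have "\<dots> \<le> \<bar>s\<bar> * L" using ln_bound[OF y] by (rule mult_left_mono) simp
      finally show ?thesis unfolding P_def by simp
    qed
    finally have "\<bar>w y powr s\<bar> \<le> P" .
    moreover have "(norm z * \<bar>ln (w y)\<bar>) ^ j \<le> (norm z * L) ^ j"
      by (intro power_mono mult_left_mono ln_bound[OF y]) auto
    ultimately show ?thesis
      unfolding norm_f bound_def by (intro mult_mono) (auto simp: P_def)
  qed
  have f_int: "integrable M (f j)" for j
  proof (rule integrable_const_bound[where B = "bound j"])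
    show "AE y in M. norm (f j y) \<le> bound j" using f_bound by (intro AE_I2)
    show "f j \<in> borel_measurable M" unfolding f_def using w_meas by measurable
  qed
  have "AE y in M. summable (\<lambda>j. norm (f j y))"
    unfolding norm_f by (intro AE_I2 summable_mult summable_exp)
  moreover have "summable (\<lambda>j. \<integral>y. norm (f j y) \<partial>M)"
  proof (rule summable_comparison_test'[where g = "\<lambda>j. measure M (space M) * bound j"])
    show "summable (\<lambda>j. measure M (space M) * bound j)"
      unfolding bound_def by (intro summable_mult summable_exp)
    have "(\<integral>y. norm (f j y) \<partial>M) \<le> (\<integral>y. bound j \<partial>M)" for j
      by (rule integral_mono[OF integrable_norm[OF f_int] integrable_const]) (use f_bound in auto)
    then show "norm (\<integral>y. norm (f j y) \<partial>M) \<le> measure M (space M) * bound j" for j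
      by simp
  qed
  ultimately have "(\<lambda>j. integral\<^sup>L M (f j)) sums (\<integral>y. (\<Sum>j. f j y) \<partial>M)"
    by (rule sums_integral[OF f_int])
  moreover have "(\<integral>y. (\<Sum>j. f j y) \<partial>M) = (\<integral>y. cpow_pos (w y) \<alpha> \<partial>M)"
    using sums_unique[OF cpow_pos_sums[OF w_pos, of _ \<alpha> s]]
    by (intro Bochner_Integration.integral_cong) (simp_all add: f_def z_def)
  moreover have "integral\<^sup>L M (f j) =
      z ^ j / of_nat (fact j) * complex_of_real (\<integral>y. w y powr s * ln (w y) ^ j \<partial>M)" for j
    unfolding f_def by (simp only: integral_mult_right_zero integral_complex_of_real)
  ultimately show ?thesis by (simp add: z_def)
qed

lemma sums_integral_cpow_pos_omega:
  fixes x :: "'a::euclidean_space"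
  assumes "R > 0" and "norm x \<noteq> R"
  shows "(\<lambda>j. (\<alpha> - complex_of_real s) ^ j / of_nat (fact j) *
      complex_of_real (integral\<^sup>L (sphere_measure R) (\<lambda>y. omega x y powr s * ln (omega x y) ^ j)))
    sums integral\<^sup>L (sphere_measure R) (\<lambda>y. cpow_pos (omega x y) \<alpha>)"
proof -
  have pos: "\<forall>y\<in>sphere 0 R. omega x y > 0"
    using omega_pos_sphere[OF assms(2)] by blast
  then have "continuous_on (sphere 0 R) (\<lambda>y. ln (omega x y))"
    using assms(2) by (intro continuous_on_ln continuous_on_omega) auto
  then have "bounded ((\<lambda>y. ln (omega x y)) ` sphere 0 R)"
    by (intro compact_imp_bounded compact_continuous_image compact_sphere)
  then obtain L where "\<forall>y\<in>sphere 0 R. \<bar>ln (omega x y)\<bar> \<le> L"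
    unfolding bounded_iff by auto
  moreover have "omega x \<in> borel_measurable (sphere_measure R)"
    using borel_measurable_continuous_on_restrict[OF continuous_on_omega[OF assms(2)]]
    by (simp add: measurable_cong_sets[OF sets_sphere_measure refl])
  ultimately show ?thesis
    using assms pos by (intro sums_integral_cpow_pos[where L = L] finite_measure_sphere_measure) auto
qed

lemma holomorphic_on_UNIV_if_power_series:
  assumes "\<And>w. (\<lambda>n. a n * (w - z) ^ n) sums f w"
  shows "f holomorphic_on UNIV"
  unfolding holomorphic_on_def
proof
  fix w :: complex
  have "f holomorphic_on ball z (norm (w - z) + 1)"
    using assms by (rule power_series_holomorphic)
  then have "f field_differentiable (at w)"
    by (rule holomorphic_on_imp_differentiable_at) (auto simp: dist_norm norm_minus_commute)
  then show "f field_differentiable (at w within UNIV)" by simp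
qed

lemma sums_even_if_odd_eq_0:
  assumes "\<And>m. f (2 * m + 1) = 0" and "f sums s"
  shows "(\<lambda>m. f (2 * m)) sums s"
proof (subst sums_mono_reindex)
  show "strict_mono (\<lambda>m::nat. 2 * m)" by (rule strict_monoI) simp
  show "f n = 0" if "n \<notin> range (\<lambda>m. 2 * m)" for n
    using that assms(1) by (metis oddE evenE rangeI)
qed (rule assms(2))

lemma integral_cpow_pos_omega_half_dim:
  fixes x :: "'a::euclidean_space"
  defines "s \<equiv> real (DIM('a) - 1) / 2"
  assumes "R > 0" and "norm x \<noteq> R"
  shows "integral\<^sup>L (sphere_measure R)
      (\<lambda>y. cpow_pos (omega x y) (complex_of_real s + \<i> * complex_of_real b)) =
    complex_of_real (integral\<^sup>L (sphere_measure R) (\<lambda>y. omega x y powr s * cos (b * ln (omega x y))))"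
proof -
  have int: "integrable (sphere_measure R) (\<lambda>y. a * complex_of_real (omega x y powr s * h (ln (omega x y))))"
    if "continuous_on UNIV h" for a and h :: "real \<Rightarrow> real"
    by (rule integrable_sphere_measure[OF assms(2)])
      (intro continuous_intros continuous_on_omega_powr_comp_ln[OF assms(3) that])
  have cos: "continuous_on UNIV (\<lambda>t. cos (b * t))" and sin: "continuous_on UNIV (\<lambda>t. sin (b * t))"
    by (intro continuous_intros)+
  have "integral\<^sup>L (sphere_measure R) (\<lambda>y. cpow_pos (omega x y) (complex_of_real s + \<i> * complex_of_real b)) =
      integral\<^sup>L (sphere_measure R) (\<lambda>y. 1 * complex_of_real (omega x y powr s * cos (b * ln (omega x y))) +
        \<i> * complex_of_real (omega x y powr s * sin (b * ln (omega x y))))"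
    using assms(3) by (intro Bochner_Integration.integral_cong) (simp_all add: cpow_pos_real_imag omega_pos)
  also have "\<dots> = complex_of_real (integral\<^sup>L (sphere_measure R) (\<lambda>y. omega x y powr s * cos (b * ln (omega x y))))
      + \<i> * complex_of_real (integral\<^sup>L (sphere_measure R) (\<lambda>y. omega x y powr s * sin (b * ln (omega x y))))"
    by (subst Bochner_Integration.integral_add[OF int[OF cos] int[OF sin]])
      (simp only: mult_1_left integral_mult_right_zero integral_complex_of_real)
  also have "integral\<^sup>L (sphere_measure R) (\<lambda>y. omega x y powr s * sin (b * ln (omega x y))) = 0"
    unfolding s_def by (rule integral_omega_odd_eq_0[OF assms(2,3) sin]) simp
  finally show ?thesis by simp
qed

theorem corollary2:
  fixes x :: "'a::euclidean_space" and R :: real and k :: nat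
    and F :: "complex \<Rightarrow> complex"
  defines "k \<equiv> DIM('a) - 1"
  defines "F \<equiv> (\<lambda>\<alpha>. integral\<^sup>L (sphere_measure R) (\<lambda>y. cpow_pos (omega x y) \<alpha>))"
  assumes "R > 0" and "norm x \<noteq> R"
  shows "(\<forall>b::real.
            F (complex_of_real (real k / 2) + \<i> * complex_of_real b) =
            complex_of_real (integral\<^sup>L (sphere_measure R)
               (\<lambda>y. omega x y powr (real k / 2) * cos (b * ln (omega x y)))))
       \<and> (\<forall>(b::real) (m::nat).
            integral\<^sup>L (sphere_measure R)
               (\<lambda>y. omega x y powr (real k / 2) * (ln (omega x y)) ^ (2 * m + 1)
                      * cos (b * ln (omega x y))) = 0
          \<and> integral\<^sup>L (sphere_measure R)
               (\<lambda>y. omega x y powr (real k / 2) * (ln (omega x y)) ^ (2 * m)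
                      * sin (b * ln (omega x y))) = 0)
       \<and> F holomorphic_on UNIV
       \<and> (\<forall>\<alpha>::complex.
            (\<lambda>m. (\<alpha> - complex_of_real (real k / 2)) ^ (2 * m) / of_nat (fact (2 * m))
                 * complex_of_real (integral\<^sup>L (sphere_measure R)
                     (\<lambda>y. omega x y powr (real k / 2) * (ln (omega x y)) ^ (2 * m))))
            sums F \<alpha>)"
proof -
  have R: "R > 0" and x: "norm x \<noteq> R" using assms by auto
  have half: "real k / 2 = real (DIM('a) - 1) / 2" by (simp add: k_def)
  have odd: "integral\<^sup>L (sphere_measure R) (\<lambda>y. omega x y powr (real k / 2) * h (ln (omega x y))) = 0"
    if "continuous_on UNIV h" and "\<And>t. h (- t) = - h t" for h
    unfolding half using R x that by (rule integral_omega_odd_eq_0)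
  have taylor: "(\<lambda>j. (\<alpha> - complex_of_real (real k / 2)) ^ j / of_nat (fact j) *
      complex_of_real (integral\<^sup>L (sphere_measure R) (\<lambda>y. omega x y powr (real k / 2) * ln (omega x y) ^ j)))
    sums F \<alpha>" for \<alpha>
    unfolding F_def by (rule sums_integral_cpow_pos_omega[OF R x])
  show ?thesis
  proof (intro conjI allI)
    show "F (complex_of_real (real k / 2) + \<i> * complex_of_real b) =
      complex_of_real (integral\<^sup>L (sphere_measure R) (\<lambda>y. omega x y powr (real k / 2) * cos (b * ln (omega x y))))"
      for b unfolding F_def half by (rule integral_cpow_pos_omega_half_dim[OF R x])
    show "integral\<^sup>L (sphere_measure R) (\<lambda>y. omega x y powr (real k / 2) * ln (omega x y) ^ (2 * m + 1) *
        cos (b * ln (omega x y))) = 0" for b m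
      using odd[of "\<lambda>t. t ^ (2 * m + 1) * cos (b * t)"] by (simp add: mult.assoc continuous_intros)
    show "integral\<^sup>L (sphere_measure R) (\<lambda>y. omega x y powr (real k / 2) * ln (omega x y) ^ (2 * m) *
        sin (b * ln (omega x y))) = 0" for b m
      using odd[of "\<lambda>t. t ^ (2 * m) * sin (b * t)"] by (simp add: mult.assoc continuous_intros)
    show "F holomorphic_on UNIV"
      using taylor by (intro holomorphic_on_UNIV_if_power_series[where z = "complex_of_real (real k / 2)"
          and a = "\<lambda>j. complex_of_real (integral\<^sup>L (sphere_measure R)
            (\<lambda>y. omega x y powr (real k / 2) * ln (omega x y) ^ j)) / of_nat (fact j)"])
        (simp add: mult.commute)
    show "(\<lambda>m. (\<alpha> - complex_of_real (real k / 2)) ^ (2 * m) / of_nat (fact (2 * m)) *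
        complex_of_real (integral\<^sup>L (sphere_measure R) (\<lambda>y. omega x y powr (real k / 2) * ln (omega x y) ^ (2 * m))))
      sums F \<alpha>" for \<alpha>
      using odd[of "\<lambda>t. t ^ (2 * m + 1)" for m]
      by (intro sums_even_if_odd_eq_0[OF _ taylor]) (simp add: continuous_intros)
  qed
qed

end
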